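(* Let $M$ be a finite monoid. (i) Every filtered left $M$-set $A$ is cyclic, i.e. there is $c\in A$ with $A=Mc$; in particular $|A|\le |M|$. (ii) The set $\mathsf F_M$ of isomorphism classes of filtered left $M$-sets (equivalently, of points of the topos of right $M$-sets) is finite.
   Context: A left $M$-set $A$ is filtered if the functor $(-)\otimes_M A$ from right $M$-sets to sets preserves finite limits; equivalently: (F1) $A\neq\emptyset$; (F2) if $m_1,m_2\in M$, $a\in A$ and $m_1a=m_2a$, then there are $m\in M$, $\tilde a\in A$ with $m\tilde a=a$ and $m_1m=m_2m$; (F3) for $a_1,a_2\in A$ there are $m_1,m_2\in M$, $a\in A$ with $m_1a=a_1$, $m_2a=a_2$. *)

theory Defs
  imports Main
begin

definition left_mset :: "'a set \<Rightarrow> ('m::monoid_mult \<Rightarrow> 'a \<Rightarrow> 'a) \<Rightarrow> bool" where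
  "left_mset A act \<longleftrightarrow>
     (\<forall>m. \<forall>a\<in>A. act m a \<in> A) \<and>
     (\<forall>a\<in>A. act 1 a = a) \<and>
     (\<forall>m n. \<forall>a\<in>A. act (m * n) a = act m (act n a))"

definition filtered_mset :: "'a set \<Rightarrow> ('m::monoid_mult \<Rightarrow> 'a \<Rightarrow> 'a) \<Rightarrow> bool" where
  "filtered_mset A act \<longleftrightarrow>
     left_mset A act \<and>
     A \<noteq> {} \<and>
     (\<forall>m1 m2. \<forall>a\<in>A. act m1 a = act m2 a \<longrightarrow>
        (\<exists>m. \<exists>a'\<in>A. act m a' = a \<and> m1 * m = m2 * m)) \<and>
     (\<forall>a1\<in>A. \<forall>a2\<in>A. \<exists>m1 m2. \<exists>a\<in>A. act m1 a = a1 \<and> act m2 a = a2)"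

definition mset_iso :: "'a set \<Rightarrow> ('m::monoid_mult \<Rightarrow> 'a \<Rightarrow> 'a) \<Rightarrow> 'b set \<Rightarrow> ('m \<Rightarrow> 'b \<Rightarrow> 'b) \<Rightarrow> bool" where
  "mset_iso A act B act' \<longleftrightarrow>
     (\<exists>f. bij_betw f A B \<and> (\<forall>m. \<forall>a\<in>A. f (act m a) = act' m (f a)))"

end

theory Submission
  imports Defs
begin

text \<open>Choose c in a filtered M-set A whose orbit Mc is as large as possible. For any a \<in> A,
  (F3) yields d with c and a both in Md, so Mc \<subseteq> Md, hence Mc = Md by maximality, and
  a \<in> Mc. A cyclic M-set Mc is isomorphic to the quotient of M by the kernel relation of
  m \<mapsto> mc, so up to isomorphism it is determined by a relation on the finite set M.\<close>

abbreviation orbit :: "('m \<Rightarrow> 'a \<Rightarrow> 'a) \<Rightarrow> 'a \<Rightarrow> 'a set" where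
  "orbit act c \<equiv> range (\<lambda>m. act m c)"

lemma left_msetD:
  assumes "left_mset A act" and "a \<in> A"
  shows left_mset_closed: "act m a \<in> A"
    and left_mset_one: "act 1 a = a"
    and left_mset_mult: "act (m * n) a = act m (act n a)"
  using assms unfolding left_mset_def by auto

lemma orbit_subset_carrier:
  "left_mset A act \<Longrightarrow> c \<in> A \<Longrightarrow> orbit act c \<subseteq> A"
  by (auto intro: left_mset_closed)

lemma orbit_subset_orbit:
  assumes "left_mset A act" and "d \<in> A" and "c \<in> orbit act d"
  shows "orbit act c \<subseteq> orbit act d"
proof
  fix x assume "x \<in> orbit act c"
  then obtain m where "x = act m c" by blast
  moreover obtain k where "c = act k d" using assms(3) by blast
  ultimately have "x = act (m * k) d" using left_mset_mult[OF assms(1,2)] by simp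
  then show "x \<in> orbit act d" by blast
qed

lemma finite_orbit:
  "finite (UNIV :: 'm set) \<Longrightarrow> finite (orbit (act :: 'm \<Rightarrow> 'a \<Rightarrow> 'a) c)"
  by simp

lemma card_orbit_le:
  "finite (UNIV :: 'm set) \<Longrightarrow> card (orbit (act :: 'm \<Rightarrow> 'a \<Rightarrow> 'a) c) \<le> card (UNIV :: 'm set)"
  by (rule card_image_le)

lemma filtered_msetD:
  assumes "filtered_mset A act"
  shows filtered_mset_left_mset: "left_mset A act"
    and filtered_mset_nonempty: "A \<noteq> {}"
    and filtered_mset_equalizer: "\<lbrakk>a \<in> A; act m1 a = act m2 a\<rbrakk>
      \<Longrightarrow> \<exists>m. \<exists>a'\<in>A. act m a' = a \<and> m1 * m = m2 * m"
    and filtered_mset_cone: "\<lbrakk>a1 \<in> A; a2 \<in> A\<rbrakk>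
      \<Longrightarrow> \<exists>m1 m2. \<exists>a\<in>A. act m1 a = a1 \<and> act m2 a = a2"
  using assms unfolding filtered_mset_def by blast+

lemma filtered_msetI:
  assumes "left_mset A act" and "A \<noteq> {}"
    and "\<And>m1 m2 a. \<lbrakk>a \<in> A; act m1 a = act m2 a\<rbrakk>
      \<Longrightarrow> \<exists>m. \<exists>a'\<in>A. act m a' = a \<and> m1 * m = m2 * m"
    and "\<And>a1 a2. \<lbrakk>a1 \<in> A; a2 \<in> A\<rbrakk>
      \<Longrightarrow> \<exists>m1 m2. \<exists>a\<in>A. act m1 a = a1 \<and> act m2 a = a2"
  shows "filtered_mset A act"
  unfolding filtered_mset_def using assms by blast

lemma filtered_mset_cyclic:
  fixes act :: "'m::monoid_mult \<Rightarrow> 'a \<Rightarrow> 'a"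
  assumes finM: "finite (UNIV :: 'm set)" and F: "filtered_mset A act"
  shows "\<exists>c\<in>A. A = orbit act c"
proof -
  note L = filtered_mset_left_mset[OF F]
  obtain a0 where "a0 \<in> A" using filtered_mset_nonempty[OF F] by blast
  have "\<forall>d. d \<in> A \<longrightarrow> card (orbit act d) < Suc (card (UNIV :: 'm set))"
    using card_orbit_le[OF finM, of act] by (simp add: less_Suc_eq_le)
  then obtain c where c: "c \<in> A"
    and cmax: "\<And>d. d \<in> A \<Longrightarrow> card (orbit act d) \<le> card (orbit act c)"
    using Lattices_Big.ex_has_greatest_nat[of "\<lambda>d. d \<in> A" a0 "\<lambda>d. card (orbit act d)"]
      \<open>a0 \<in> A\<close> by blast
  have "A \<subseteq> orbit act c"
  proof
    fix a assume "a \<in> A"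
    then obtain m1 m2 d where d: "d \<in> A" "act m1 d = c" "act m2 d = a"
      using filtered_mset_cone[OF F c] by blast
    have "c \<in> orbit act d" using d(2) by blast
    then have "orbit act c \<subseteq> orbit act d" by (rule orbit_subset_orbit[OF L d(1)])
    then have "orbit act c = orbit act d"
      using card_seteq[OF finite_orbit[OF finM, of act d]] cmax[OF d(1)] by blast
    then show "a \<in> orbit act c" using d(3) by blast
  qed
  then show ?thesis using c orbit_subset_carrier[OF L c] by blast
qed

lemma left_mset_transfer:
  assumes L: "left_mset A act" and BA: "B = f ` A"
    and eq: "\<And>m a. a \<in> A \<Longrightarrow> f (act m a) = bct m (f a)"
  shows "left_mset B bct"
  unfolding left_mset_def BA
proof (intro conjI ballI allI)
  fix m x assume "x \<in> f ` A"
  then obtain a where a: "a \<in> A" "x = f a" by blast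
  then show "bct m x \<in> f ` A" using eq left_mset_closed[OF L] by (metis imageI)
  show "bct 1 x = x" using a eq left_mset_one[OF L] by metis
  fix n
  have "bct (m * n) x = f (act (m * n) a)" using a eq by simp
  also have "\<dots> = f (act m (act n a))" using left_mset_mult[OF L a(1)] by simp
  also have "\<dots> = bct m (bct n x)" using a eq left_mset_closed[OF L] by simp
  finally show "bct (m * n) x = bct m (bct n x)" .
qed

lemma filtered_mset_iso:
  assumes F: "filtered_mset A act" and iso: "mset_iso A act B bct"
  shows "filtered_mset B bct"
proof -
  obtain f where bij: "bij_betw f A B" and eq: "\<And>m a. a \<in> A \<Longrightarrow> f (act m a) = bct m (f a)"
    using iso unfolding mset_iso_def by blast
  have BA: "B = f ` A" and inj: "inj_on f A" using bij by (auto simp: bij_betw_def)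
  note L = filtered_mset_left_mset[OF F]
  show ?thesis
  proof (rule filtered_msetI)
    show "left_mset B bct" using L BA eq by (rule left_mset_transfer)
    show "B \<noteq> {}" using filtered_mset_nonempty[OF F] BA by blast
  next
    fix m1 m2 x assume "x \<in> B" and e: "bct m1 x = bct m2 x"
    then obtain a where a: "a \<in> A" "x = f a" using BA by blast
    then have "f (act m1 a) = f (act m2 a)" using e eq by simp
    then have "act m1 a = act m2 a"
      using inj left_mset_closed[OF L a(1)] by (meson inj_onD)
    then obtain m a' where a': "a' \<in> A" "act m a' = a" "m1 * m = m2 * m"
      using filtered_mset_equalizer[OF F a(1)] by blast
    then have "f a' \<in> B" "bct m (f a') = x" using a eq BA by auto
    then show "\<exists>m. \<exists>x'\<in>B. bct m x' = x \<and> m1 * m = m2 * m" using a'(3) by blast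
  next
    fix x1 x2 assume "x1 \<in> B" "x2 \<in> B"
    then obtain a1 a2 where a: "a1 \<in> A" "x1 = f a1" "a2 \<in> A" "x2 = f a2"
      using BA by blast
    then obtain m1 m2 a where "a \<in> A" "act m1 a = a1" "act m2 a = a2"
      using filtered_mset_cone[OF F] by blast
    then have "f a \<in> B" "bct m1 (f a) = x1" "bct m2 (f a) = x2" using a eq BA by auto
    then show "\<exists>m1 m2. \<exists>x\<in>B. bct m1 x = x1 \<and> bct m2 x = x2" by blast
  qed
qed

definition orbit_kernel :: "('m \<Rightarrow> 'a \<Rightarrow> 'a) \<Rightarrow> 'a \<Rightarrow> ('m \<times> 'm) set" where
  "orbit_kernel act c = {(n, m). act n c = act m c}"

text \<open>The quotient of M by the classes of a relation R makes sense for an arbitrary R on M,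
  which is what makes the family of all such quotients finite.\<close>

definition quotient_carrier :: "('m \<times> 'm) set \<Rightarrow> 'm set set" where
  "quotient_carrier R = range (\<lambda>m. {n. (n, m) \<in> R})"

definition quotient_act :: "('m::monoid_mult \<times> 'm) set \<Rightarrow> 'm \<Rightarrow> 'm set \<Rightarrow> 'm set" where
  "quotient_act R k X = {n. \<exists>m\<in>X. (n, k * m) \<in> R}"

lemma cyclic_mset_iso_quotient:
  fixes act :: "'m::monoid_mult \<Rightarrow> 'a \<Rightarrow> 'a"
  assumes L: "left_mset A act" and c: "c \<in> A" and Ac: "A = orbit act c"
  shows "mset_iso A act (quotient_carrier (orbit_kernel act c)) (quotient_act (orbit_kernel act c))"
proof -
  define f where "f a = {n. act n c = a}" for a
  have "inj_on f A"
  proof (rule inj_onI)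
    fix a b assume "a \<in> A" "f a = f b"
    then obtain m where "a = act m c" using Ac by blast
    then show "a = b" using \<open>f a = f b\<close> unfolding f_def by blast
  qed
  moreover have "f ` A = quotient_carrier (orbit_kernel act c)"
    unfolding quotient_carrier_def Ac orbit_kernel_def f_def by (auto simp: image_image)
  moreover have "f (act k a) = quotient_act (orbit_kernel act c) k (f a)" if a: "a \<in> A" for k a
  proof -
    obtain m where "a = act m c" using a Ac by blast
    then show ?thesis
      unfolding f_def quotient_act_def orbit_kernel_def using left_mset_mult[OF L c] by auto
  qed
  ultimately show ?thesis unfolding mset_iso_def bij_betw_def by blast
qed

lemma filtered_mset_iso_quotient:
  fixes act :: "'m::monoid_mult \<Rightarrow> 'a \<Rightarrow> 'a"
  assumes finM: "finite (UNIV :: 'm set)" and F: "filtered_mset A act"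
  shows "\<exists>R. filtered_mset (quotient_carrier R) (quotient_act R)
           \<and> mset_iso A act (quotient_carrier R) (quotient_act R)"
proof -
  obtain c where "c \<in> A" "A = orbit act c" using filtered_mset_cyclic[OF finM F] by blast
  then have "mset_iso A act (quotient_carrier (orbit_kernel act c)) (quotient_act (orbit_kernel act c))"
    by (rule cyclic_mset_iso_quotient[OF filtered_mset_left_mset[OF F]])
  then show ?thesis using filtered_mset_iso[OF F] by blast
qed

theorem theorem3p5:
  fixes A :: "'a set" and act :: "'m::monoid_mult \<Rightarrow> 'a \<Rightarrow> 'a"
  assumes finM: "finite (UNIV :: 'm set)"
  shows "(filtered_mset A act \<longrightarrow>
            (\<exists>c\<in>A. A = (\<lambda>m. act m c) ` UNIV) \<and> finite A \<and> card A \<le> card (UNIV :: 'm set))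
       \<and> (\<exists>F :: ((('m set) set) \<times> ('m \<Rightarrow> 'm set \<Rightarrow> 'm set)) set.
            finite F \<and> (\<forall>(B, bct)\<in>F. filtered_mset B bct) \<and>
            (\<forall>(A' :: 'a set) (act' :: 'm \<Rightarrow> 'a \<Rightarrow> 'a). filtered_mset A' act' \<longrightarrow>
               (\<exists>(B, bct)\<in>F. mset_iso A' act' B bct)))"
proof (intro conjI impI)
  assume "filtered_mset A act"
  then obtain c where "c \<in> A" "A = orbit act c" using filtered_mset_cyclic[OF finM] by blast
  then show "\<exists>c\<in>A. A = orbit act c" by blast
  show "finite A" "card A \<le> card (UNIV :: 'm set)"
    using finite_orbit[OF finM] card_orbit_le[OF finM] \<open>A = orbit act c\<close> by simp_all
next
  let ?F = "(\<lambda>R. (quotient_carrier R, quotient_act R)) `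
              {R :: ('m \<times> 'm) set. filtered_mset (quotient_carrier R) (quotient_act R)}"
  have "finite (UNIV :: ('m \<times> 'm) set set)" using finM by (simp add: Finite_Set.finite_set finite_prod)
  then have "finite ?F" by (rule finite_imageI[OF finite_subset[OF subset_UNIV]])
  moreover have "\<forall>(B, bct)\<in>?F. filtered_mset B bct" by auto
  moreover have "\<exists>(B, bct)\<in>?F. mset_iso A' act' B bct"
    if "filtered_mset A' act'" for A' :: "'a set" and act' :: "'m \<Rightarrow> 'a \<Rightarrow> 'a"
    using filtered_mset_iso_quotient[OF finM that] by blast
  ultimately show "\<exists>F :: ((('m set) set) \<times> ('m \<Rightarrow> 'm set \<Rightarrow> 'm set)) set.
            finite F \<and> (\<forall>(B, bct)\<in>F. filtered_mset B bct) \<and>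
            (\<forall>(A' :: 'a set) (act' :: 'm \<Rightarrow> 'a \<Rightarrow> 'a). filtered_mset A' act' \<longrightarrow>
               (\<exists>(B, bct)\<in>F. mset_iso A' act' B bct))" by blast
qed

end
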